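(* Let $n$ and $k$ be integers with $1 \le k < n$, and let $0 \le r \le k-1$. Consider a set of $n$ items, of which $k$ are "observed" and carry a total order (partial ranking) $\beta_1 \succ \beta_2 \succ \cdots \succ \beta_k$, and the remaining $n-k$ items are "unobserved". Let $j = \beta_{r+1}$ be the observed item having exactly $r$ observed items ranked above it, and let $i$ be an unobserved item. Call a complete ranking (total order) of all $n$ items compatible with $\beta$ if its restriction to the observed items coincides with $\beta_1 \succ \cdots \succ \beta_k$. Then the proportion of complete rankings compatible with $\beta$ in which $i \succ j$ equals $$p(n,k,r) = \frac{1}{t(n,k)} \sum_{s=0}^{n-k-1} V^{s}_{n-k-1}\,(s+1)\, S^{r}_{s+1}\,(n-k-s-1)!\, S^{n-k-s-1}_{k-r-1},$$ where $t(n,k) = (n-k)!\, S^{k}_{n-k}$ is the total number of complete rankings compatible with $\beta$, $S^a_b = \frac{(a+b)!}{a!\,b!}$ is the number of shuffles of two lists of lengths $a$ and $b$ (interleavings preserving the relative order within each list), and $V^a_b = \frac{b!}{(b-a)!}$ is the number of ordered selections of $a$ objects out of $b$.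
   Context: A ranking $\pi_1 \succ \pi_2 \succ \cdots$ means $\pi_1$ is ranked best. A partial ranking is a total order on a subset of the items; a complete ranking compatible with it is a linear extension, i.e., a total order on all items that preserves the relative order of the partially ranked items. *)

theory Defs
  imports Complex_Main "HOL-Combinatorics.Multiset_Permutations"
begin

text \<open>A complete ranking of the item set U is a list of all items without repetition,
  the head being the best-ranked item.\<close>

definition shuffle_count :: "nat \<Rightarrow> nat \<Rightarrow> real" where
  "shuffle_count a b = fact (a + b) / (fact a * fact b)"

definition sel_count :: "nat \<Rightarrow> nat \<Rightarrow> real" where
  "sel_count a b = fact b / fact (b - a)"

definition compatible :: "'a list \<Rightarrow> 'a list \<Rightarrow> bool" where
  "compatible beta sigma \<longleftrightarrow> filter (\<lambda>x. x \<in> set beta) sigma = beta"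

definition ranked_above :: "'a list \<Rightarrow> 'a \<Rightarrow> 'a \<Rightarrow> bool" where
  "ranked_above sigma x y \<longleftrightarrow>
     (\<exists>a b. a < b \<and> b < length sigma \<and> sigma ! a = x \<and> sigma ! b = y)"

definition t_count :: "nat \<Rightarrow> nat \<Rightarrow> real" where
  "t_count n k = fact (n - k) * shuffle_count k (n - k)"

definition p_prob :: "nat \<Rightarrow> nat \<Rightarrow> nat \<Rightarrow> real" where
  "p_prob n k r = (1 / t_count n k) *
     (\<Sum>s = 0..n - k - 1. sel_count s (n - k - 1) * real (s + 1) * shuffle_count r (s + 1)
        * fact (n - k - s - 1) * shuffle_count (n - k - s - 1) (k - r - 1))"

end

theory Submission
  imports Defs "HOL-Computational_Algebra.Formal_Power_Series"
begin

(* Restricting a complete ranking to a set B of items maps the rankings of U onto the rankings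
   of B, and all fibres have the same size n!/|B|!: a permutation g of B acts on rankings by
   map g and carries each fibre bijectively onto another, and such permutations act transitively
   on the rankings of B.  With B the observed items this gives t(n,k) = n!/k!.  With B the
   observed items together with i, a ranking is compatible with beta and has i above beta_(r+1)
   iff its restriction to B is beta with i inserted at one of the positions 0, ..., r; so there
   are (r+1) n!/(k+1)! such rankings and the proportion is (r+1)/(k+1).  The sum p(n,k,r)
   evaluates to the same value by an upper-index Vandermonde identity. *)

section \<open>The value of the sum p(n,k,r)\<close>

lemma binomial_conv_gbinomial_negated:
  "real ((c + s) choose s) = (-1) ^ s * ((- real c - 1) gchoose s)"
  using gbinomial_negated_upper[of "real (c + s)" s] by (simp add: binomial_gbinomial)

(* Negating both upper indices turns this into Vandermonde's convolution. *)
lemma sum_choose_mult_choose: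
  "(\<Sum>s\<le>N. ((a + s) choose s) * ((b + (N - s)) choose (N - s))) = (a + b + 1 + N) choose N"
proof -
  have "real (\<Sum>s\<le>N. ((a + s) choose s) * ((b + (N - s)) choose (N - s)))
      = (\<Sum>s\<le>N. (-1) ^ N * (((- real a - 1) gchoose s) * ((- real b - 1) gchoose (N - s))))"
    unfolding of_nat_sum
  proof (rule sum.cong [OF refl])
    fix s assume "s \<in> {..N}"
    then have "(-1 :: real) ^ N = (-1) ^ s * (-1) ^ (N - s)"
      by (simp flip: power_add)
    then show "real (((a + s) choose s) * ((b + (N - s)) choose (N - s)))
        = (-1) ^ N * (((- real a - 1) gchoose s) * ((- real b - 1) gchoose (N - s)))"
      by (simp only: of_nat_mult binomial_conv_gbinomial_negated mult_ac)
  qed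
  also have "\<dots> = (-1) ^ N * ((- real a - 1 + (- real b - 1)) gchoose N)"
    by (simp only: sum_distrib_left [symmetric] atMost_atLeast0 gbinomial_Vandermonde)
  also have "\<dots> = real ((a + b + 1 + N) choose N)"
    using binomial_conv_gbinomial_negated [of "a + b + 1" N] by (simp add: algebra_simps)
  finally show ?thesis by (simp only: of_nat_eq_iff)
qed

lemma shuffle_count_eq_binomial: "shuffle_count a b = real ((a + b) choose a)"
  unfolding shuffle_count_def by (simp add: binomial_fact)

lemma t_count_eq: "k \<le> n \<Longrightarrow> t_count n k = fact n / fact k"
  unfolding t_count_def shuffle_count_def by simp

lemma p_prob_summand_eq:
  assumes "s \<le> M"
  shows "sel_count s M * real (s + 1) * shuffle_count r (s + 1) * fact (M - s)
           * shuffle_count (M - s) b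
       = fact M * real (r + 1) * real (((r + 1 + s) choose s) * ((b + (M - s)) choose (M - s)))"
proof -
  have sel: "sel_count s M * fact (M - s) = fact M"
    using assms by (simp add: sel_count_def)
  have absorb: "real (s + 1) * shuffle_count r (s + 1) = real (r + 1) * real ((r + 1 + s) choose s)"
  proof -
    have "shuffle_count r (s + 1) = real (Suc (s + r) choose Suc s)"
      unfolding shuffle_count_eq_binomial
      by (simp add: binomial_symmetric[of r] ac_simps del: binomial_Suc_Suc)
    then have "real (s + 1) * shuffle_count r (s + 1) = real (Suc s * (Suc (s + r) choose Suc s))"
      by (simp add: algebra_simps del: binomial_Suc_Suc)
    also have "\<dots> = real (Suc r * (Suc (s + r) choose s))"
      by (simp only: Suc_times_binomial_add)
    finally show ?thesis
      by (simp add: algebra_simps del: binomial_Suc_Suc)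
  qed
  have shuffle: "shuffle_count (M - s) b = real ((b + (M - s)) choose (M - s))"
    by (simp add: shuffle_count_eq_binomial add.commute)
  have "sel_count s M * real (s + 1) * shuffle_count r (s + 1) * fact (M - s)
           * shuffle_count (M - s) b
      = (sel_count s M * fact (M - s)) * (real (s + 1) * shuffle_count r (s + 1))
           * shuffle_count (M - s) b"
    by (simp only: mult_ac)
  then show ?thesis
    unfolding sel absorb shuffle by (simp only: of_nat_mult mult_ac)
qed

lemma p_prob_eq:
  assumes "r < k" "k < n"
  shows "p_prob n k r = real (r + 1) / real (k + 1)"
proof -
  define M where "M = n - k - 1"
  define b where "b = k - r - 1"
  have sizes: "r + 1 + b + 1 + M = n"
    using assms unfolding M_def b_def by simp
  have index: "n - k - s - 1 = M - s" for s
    unfolding M_def by simp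
  have "(\<Sum>s = 0..n - k - 1. sel_count s (n - k - 1) * real (s + 1) * shuffle_count r (s + 1)
        * fact (n - k - s - 1) * shuffle_count (n - k - s - 1) (k - r - 1))
      = (\<Sum>s\<le>M. fact M * real (r + 1)
          * real (((r + 1 + s) choose s) * ((b + (M - s)) choose (M - s))))"
    unfolding index atLeast0AtMost M_def [symmetric] b_def [symmetric]
    by (rule sum.cong [OF refl], rule p_prob_summand_eq) simp
  also have "\<dots> = fact M * real (r + 1)
      * real (\<Sum>s\<le>M. ((r + 1 + s) choose s) * ((b + (M - s)) choose (M - s)))"
    by (simp only: of_nat_sum sum_distrib_left)
  also have "(\<Sum>s\<le>M. ((r + 1 + s) choose s) * ((b + (M - s)) choose (M - s))) = n choose M"
    using sum_choose_mult_choose[of "r + 1" b M] sizes by simp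
  also have "real (n choose M) = fact n / (fact M * fact (k + 1))"
    using binomial_fact[of M n] assms unfolding M_def by simp
  finally show ?thesis
    unfolding p_prob_def t_count_eq[OF less_imp_le[OF assms(2)]]
    by (simp add: fact_Suc field_simps del: of_nat_Suc)
qed

definition insert_at :: "nat \<Rightarrow> 'a \<Rightarrow> 'a list \<Rightarrow> 'a list" where
  "insert_at q x xs = take q xs @ x # drop q xs"

lemma set_insert_at [simp]: "set (insert_at q x xs) = insert x (set xs)"
  unfolding insert_at_def by (metis Un_insert_right append_take_drop_id list.set(2) set_append)

lemma distinct_insert_at:
  assumes "distinct xs" "x \<notin> set xs"
  shows "distinct (insert_at q x xs)"
  using assms set_take_disj_set_drop_if_distinct[OF assms(1), of q q]
  unfolding insert_at_def by (auto dest: in_set_takeD in_set_dropD)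

lemma filter_insert_at:
  assumes "x \<notin> set xs"
  shows "filter (\<lambda>y. y \<in> set xs) (insert_at q x xs) = xs"
proof -
  have "\<forall>y\<in>set (take q xs). y \<in> set xs" "\<forall>y\<in>set (drop q xs). y \<in> set xs"
    by (auto dest: in_set_takeD in_set_dropD)
  then show ?thesis
    using assms unfolding insert_at_def by simp
qed

lemma takeWhile_insert_at:
  assumes "x \<notin> set xs"
  shows "takeWhile (\<lambda>y. y \<noteq> x) (insert_at q x xs) = take q xs"
proof -
  have "y \<noteq> x" if "y \<in> set (take q xs)" for y
    using assms that by (auto dest: in_set_takeD)
  then show ?thesis
    unfolding insert_at_def by (simp add: takeWhile_append2)
qed

lemma inj_on_insert_at:
  assumes "x \<notin> set xs"
  shows "inj_on (\<lambda>q. insert_at q x xs) {..length xs}"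
proof (rule inj_onI)
  fix q q' assume "q \<in> {..length xs}" "q' \<in> {..length xs}" "insert_at q x xs = insert_at q' x xs"
  then have "length (take q xs) = length (take q' xs)"
    using takeWhile_insert_at[OF assms] by metis
  then show "q = q'"
    using \<open>q \<in> {..length xs}\<close> \<open>q' \<in> {..length xs}\<close> by simp
qed

lemma filter_eq_iff_insert_at:
  assumes "distinct ys" "set ys = insert x (set xs)" "x \<notin> set xs"
  shows "filter (\<lambda>y. y \<in> set xs) ys = xs \<longleftrightarrow> (\<exists>q\<le>length xs. ys = insert_at q x xs)"
proof
  assume filtered: "filter (\<lambda>y. y \<in> set xs) ys = xs"
  obtain as bs where ys: "ys = as @ x # bs"
    using assms(2) split_list[of x ys] by blast
  have "set as \<subseteq> set xs" "set bs \<subseteq> set xs"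
    using assms unfolding ys by auto
  then have "as @ bs = xs"
    using filtered assms(3) unfolding ys by (simp add: filter_id_conv[THEN iffD2] subset_iff)
  then have "ys = insert_at (length as) x xs"
    unfolding ys insert_at_def by auto
  moreover have "length as \<le> length xs"
    using \<open>as @ bs = xs\<close> by auto
  ultimately show "\<exists>q\<le>length xs. ys = insert_at q x xs" by blast
next
  assume "\<exists>q\<le>length xs. ys = insert_at q x xs"
  then show "filter (\<lambda>y. y \<in> set xs) ys = xs"
    using filter_insert_at[OF assms(3)] by blast
qed

lemma ranked_above_iff_append_Cons:
  "ranked_above sigma x y \<longleftrightarrow> (\<exists>as bs. sigma = as @ x # bs \<and> y \<in> set bs)"
proof
  assume "ranked_above sigma x y"
  then obtain a b where ab: "a < b" "b < length sigma" "sigma ! a = x" "sigma ! b = y"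
    unfolding ranked_above_def by blast
  then have "sigma = take a sigma @ x # drop (Suc a) sigma"
    by (metis id_take_nth_drop order.strict_trans)
  moreover have "y \<in> set (drop (Suc a) sigma)"
    unfolding in_set_conv_nth using ab by (intro exI[of _ "b - Suc a"]) auto
  ultimately show "\<exists>as bs. sigma = as @ x # bs \<and> y \<in> set bs" by blast
next
  assume "\<exists>as bs. sigma = as @ x # bs \<and> y \<in> set bs"
  then obtain as bs j where "sigma = as @ x # bs" "j < length bs" "bs ! j = y"
    by (auto simp: in_set_conv_nth)
  then show "ranked_above sigma x y"
    unfolding ranked_above_def
    by (intro exI[of _ "length as"] exI[of _ "length as + Suc j"]) (auto simp: nth_append)
qed

lemma ranked_above_filter:
  assumes "ranked_above sigma x y" "P x" "P y"
  shows "ranked_above (filter P sigma) x y"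
proof -
  obtain as bs where "sigma = as @ x # bs" "y \<in> set bs"
    using assms(1) unfolding ranked_above_iff_append_Cons by blast
  then have "filter P sigma = filter P as @ x # filter P bs" "y \<in> set (filter P bs)"
    using assms(2,3) by simp_all
  then show ?thesis
    unfolding ranked_above_iff_append_Cons by blast
qed

lemma ranked_above_asym:
  assumes "distinct sigma" "ranked_above sigma x y"
  shows "\<not> ranked_above sigma y x"
proof
  assume "ranked_above sigma y x"
  then obtain c d where cd: "c < d" "d < length sigma" "sigma ! c = y" "sigma ! d = x"
    unfolding ranked_above_def by blast
  obtain a b where ab: "a < b" "b < length sigma" "sigma ! a = x" "sigma ! b = y"
    using assms(2) unfolding ranked_above_def by blast
  have "a = d"
    using nth_eq_iff_index_eq[OF assms(1), of a d] ab cd by simp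
  moreover have "b = c"
    using nth_eq_iff_index_eq[OF assms(1), of b c] ab cd by simp
  ultimately show False using ab cd by simp
qed

lemma ranked_above_total:
  assumes "x \<in> set sigma" "y \<in> set sigma" "x \<noteq> y"
  shows "ranked_above sigma x y \<or> ranked_above sigma y x"
proof -
  obtain a b where "a < length sigma" "sigma ! a = x" "b < length sigma" "sigma ! b = y"
    using assms(1,2) by (auto simp: in_set_conv_nth)
  then show ?thesis
    unfolding ranked_above_def using assms(3) by (metis linorder_neqE_nat)
qed

lemma ranked_above_filter_iff:
  assumes "distinct sigma" "x \<in> set sigma" "y \<in> set sigma" "x \<noteq> y" "P x" "P y"
  shows "ranked_above (filter P sigma) x y \<longleftrightarrow> ranked_above sigma x y"
  using ranked_above_filter[of sigma _ _ P] ranked_above_total[OF assms(2-4)]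
    ranked_above_asym[of "filter P sigma" x y] assms(1,5,6)
  by (metis distinct_filter)

lemma ranked_above_insert_at:
  assumes "distinct xs" "x \<notin> set xs" "r < length xs"
  shows "ranked_above (insert_at q x xs) x (xs ! r) \<longleftrightarrow> q \<le> r"
proof
  assume "q \<le> r"
  then have "xs ! r = drop q xs ! (r - q)" "r - q < length (drop q xs)"
    using assms(3) by simp_all
  then have "xs ! r \<in> set (drop q xs)"
    by (metis nth_mem)
  then show "ranked_above (insert_at q x xs) x (xs ! r)"
    unfolding ranked_above_iff_append_Cons insert_at_def by blast
next
  assume above: "ranked_above (insert_at q x xs) x (xs ! r)"
  show "q \<le> r"
  proof (rule ccontr)
    assume "\<not> q \<le> r"
    then have "xs ! r = take q xs ! r" "r < length (take q xs)"
      using assms(3) by simp_all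
    then obtain as bs where "take q xs = as @ xs ! r # bs"
      by (metis nth_mem split_list)
    then have "insert_at q x xs = as @ xs ! r # (bs @ x # drop q xs)"
      unfolding insert_at_def by simp
    then have "ranked_above (insert_at q x xs) (xs ! r) x"
      unfolding ranked_above_iff_append_Cons by (intro exI[of _ as] exI[of _ "bs @ x # drop q xs"]) simp
    then show False
      using above ranked_above_asym[OF distinct_insert_at[OF assms(1,2)]] by blast
  qed
qed

section \<open>Restricting rankings to a subset of the items\<close>

lemma filter_map_permutes:
  assumes "g permutes B"
  shows "filter (\<lambda>x. x \<in> B) (map g xs) = map g (filter (\<lambda>x. x \<in> B) xs)"
  using permutes_in_image[OF assms] by (simp add: filter_map comp_def)

lemma map_permutes_filter_fiber:
  assumes "g permutes B" "B \<subseteq> U" "sigma \<in> permutations_of_set U"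
    "filter (\<lambda>x. x \<in> B) sigma = gamma"
  shows "map g sigma \<in> permutations_of_set U" "filter (\<lambda>x. x \<in> B) (map g sigma) = map g gamma"
proof -
  have "g permutes U"
    using permutes_subset[OF assms(1,2)] .
  moreover have "map g sigma \<in> map g ` permutations_of_set U"
    using assms(3) by (rule imageI)
  ultimately show "map g sigma \<in> permutations_of_set U"
    by (simp add: permutations_of_set_image_permutes)
  show "filter (\<lambda>x. x \<in> B) (map g sigma) = map g gamma"
    using assms(4) filter_map_permutes[OF assms(1)] by simp
qed

lemma card_filter_fiber_map_permutes:
  assumes "g permutes B" "B \<subseteq> U"
  shows "card {sigma \<in> permutations_of_set U. filter (\<lambda>x. x \<in> B) sigma = map g gamma}
       = card {sigma \<in> permutations_of_set U. filter (\<lambda>x. x \<in> B) sigma = gamma}"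
    (is "card (?F (map g gamma)) = card (?F gamma)")
proof -
  have inv: "inv g permutes B"
    using permutes_inv[OF assms(1)] .
  have inverses: "map (inv g) (map g ys) = ys" "map g (map (inv g) ys) = ys" for ys
    using permutes_inverses[OF assms(1)] by (simp_all add: map_idI)
  have "?F (map g gamma) = map g ` ?F gamma"
  proof
    show "map g ` ?F gamma \<subseteq> ?F (map g gamma)"
      using map_permutes_filter_fiber[OF assms] by blast
    show "?F (map g gamma) \<subseteq> map g ` ?F gamma"
    proof
      fix tau assume "tau \<in> ?F (map g gamma)"
      from \<open>tau \<in> ?F (map g gamma)\<close> have "map (inv g) tau \<in> ?F (map (inv g) (map g gamma))"
        using map_permutes_filter_fiber[OF inv assms(2)] by simp
      then have "map (inv g) tau \<in> ?F gamma"
        by (simp only: inverses)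
      then show "tau \<in> map g ` ?F gamma"
        by (rule image_eqI[rotated]) (simp only: inverses)
    qed
  qed
  moreover have "inj_on (map g) (?F gamma)"
    using inj_mapI[OF permutes_inj[OF assms(1)]] by (rule inj_on_subset) simp
  ultimately show ?thesis
    by (simp add: card_image)
qed

lemma permutes_map_to_permutation:
  assumes "gamma \<in> permutations_of_set B" "gamma' \<in> permutations_of_set B"
  obtains g where "g permutes B" "map g gamma = gamma'"
proof
  have len: "length gamma = length gamma'"
    using assms by (simp add: length_finite_permutations_of_set)
  have dist: "distinct gamma" "distinct gamma'" and set: "set gamma = B" "set gamma' = B"
    using assms by (auto dest: permutations_of_setD)
  show "permutation_of_list (zip gamma gamma') permutes B"
    using len dist set by (intro permutation_of_list_permutes list_permutesI) simp_all
  show "map (permutation_of_list (zip gamma gamma')) gamma = gamma'"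
    using len dist
    by (intro nth_equalityI) (simp_all add: permutation_of_list_def map_of_zip_nth)
qed

lemma card_filter_fiber_eq:
  assumes "B \<subseteq> U" "gamma \<in> permutations_of_set B" "gamma' \<in> permutations_of_set B"
  shows "card {sigma \<in> permutations_of_set U. filter (\<lambda>x. x \<in> B) sigma = gamma'}
       = card {sigma \<in> permutations_of_set U. filter (\<lambda>x. x \<in> B) sigma = gamma}"
proof -
  obtain g where "g permutes B" "map g gamma = gamma'"
    using permutes_map_to_permutation[OF assms(2,3)] .
  then show ?thesis
    using card_filter_fiber_map_permutes[OF _ assms(1)] by blast
qed

lemma card_filter_preimage:
  assumes "finite U" "B \<subseteq> U" "Gamma \<subseteq> permutations_of_set B"
  shows "fact (card B) * card {sigma \<in> permutations_of_set U. filter (\<lambda>x. x \<in> B) sigma \<in> Gamma}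
       = card Gamma * fact (card U)"
proof -
  let ?F = "\<lambda>gamma. {sigma \<in> permutations_of_set U. filter (\<lambda>x. x \<in> B) sigma = gamma}"
  have "finite B"
    using finite_subset[OF assms(2,1)] .
  then obtain gamma0 where gamma0: "gamma0 \<in> permutations_of_set B"
    using permutations_of_set_empty_iff by blast
  have card_UN_fibers: "card (\<Union>gamma\<in>Gamma'. ?F gamma) = card Gamma' * card (?F gamma0)"
    if "Gamma' \<subseteq> permutations_of_set B" for Gamma'
  proof -
    have "card (\<Union>gamma\<in>Gamma'. ?F gamma) = (\<Sum>gamma\<in>Gamma'. card (?F gamma))"
    proof (rule card_UN_disjoint)
      show "finite Gamma'"
        using that finite_permutations_of_set by (rule finite_subset)
    qed auto
    also have "\<dots> = (\<Sum>gamma\<in>Gamma'. card (?F gamma0))"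
      using that by (intro sum.cong refl card_filter_fiber_eq[OF assms(2) gamma0]) blast
    finally show ?thesis by simp
  qed
  have "filter (\<lambda>x. x \<in> B) sigma \<in> permutations_of_set B" if "sigma \<in> permutations_of_set U" for sigma
    using that assms(2) by (intro permutations_of_setI) (auto dest: permutations_of_setD)
  then have "permutations_of_set U = (\<Union>gamma\<in>permutations_of_set B. ?F gamma)"
    by blast
  then have "fact (card U) = fact (card B) * card (?F gamma0)"
    using card_UN_fibers[OF order_refl] assms(1) \<open>finite B\<close> by simp
  moreover have "{sigma \<in> permutations_of_set U. filter (\<lambda>x. x \<in> B) sigma \<in> Gamma}
      = (\<Union>gamma\<in>Gamma. ?F gamma)"
    by blast
  ultimately show ?thesis
    using card_UN_fibers[OF assms(3)] by simp
qed

lemma compatible_ranked_above_iff_filter: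
  assumes "distinct sigma" "insert i (set beta) \<subseteq> set sigma"
    and "distinct beta" "i \<notin> set beta" "r < length beta"
  shows "compatible beta sigma \<and> ranked_above sigma i (beta ! r) \<longleftrightarrow>
         filter (\<lambda>x. x \<in> insert i (set beta)) sigma \<in> (\<lambda>q. insert_at q i beta) ` {..r}"
proof -
  define tau where "tau = filter (\<lambda>x. x \<in> insert i (set beta)) sigma"
  have tau: "distinct tau" "set tau = insert i (set beta)"
    using assms(1,2) unfolding tau_def by auto
  have "filter (\<lambda>x. x \<in> set beta) tau = filter (\<lambda>x. x \<in> set beta) sigma"
    unfolding tau_def filter_filter by (rule filter_cong) auto
  then have "compatible beta sigma \<longleftrightarrow> filter (\<lambda>x. x \<in> set beta) tau = beta"
    unfolding compatible_def by simp
  also have "\<dots> \<longleftrightarrow> (\<exists>q\<le>length beta. tau = insert_at q i beta)"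
    using filter_eq_iff_insert_at[OF tau assms(4)] .
  finally have compatible: "compatible beta sigma \<longleftrightarrow> (\<exists>q\<le>length beta. tau = insert_at q i beta)" .
  have above: "ranked_above sigma i (beta ! r) \<longleftrightarrow> ranked_above tau i (beta ! r)"
    unfolding tau_def using assms by (intro ranked_above_filter_iff [symmetric]) auto
  show ?thesis
    unfolding compatible above tau_def [symmetric]
  proof
    assume "(\<exists>q\<le>length beta. tau = insert_at q i beta) \<and> ranked_above tau i (beta ! r)"
    then obtain q where "tau = insert_at q i beta" "ranked_above tau i (beta ! r)"
      by blast
    then show "tau \<in> (\<lambda>q. insert_at q i beta) ` {..r}"
      using ranked_above_insert_at[OF assms(3-5)] by auto
  next
    assume "tau \<in> (\<lambda>q. insert_at q i beta) ` {..r}"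
    then obtain q where "q \<le> r" "tau = insert_at q i beta"
      by blast
    moreover have "q \<le> length beta"
      using \<open>q \<le> r\<close> assms(5) by simp
    ultimately show "(\<exists>q\<le>length beta. tau = insert_at q i beta) \<and> ranked_above tau i (beta ! r)"
      using ranked_above_insert_at[OF assms(3-5)] by auto
  qed
qed

lemma card_compatible:
  assumes "finite U" "distinct beta" "set beta \<subseteq> U"
  shows "fact (length beta) * card {sigma \<in> permutations_of_set U. compatible beta sigma}
       = fact (card U)"
proof -
  have "{sigma \<in> permutations_of_set U. compatible beta sigma}
      = {sigma \<in> permutations_of_set U. filter (\<lambda>x. x \<in> set beta) sigma \<in> {beta}}"
    unfolding compatible_def by simp
  then show ?thesis
    using card_filter_preimage[OF assms(1,3), of "{beta}"] assms(2) by (auto simp: distinct_card)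
qed

lemma card_compatible_ranked_above:
  assumes "finite U" "distinct beta" "set beta \<subseteq> U" "i \<in> U" "i \<notin> set beta" "r < length beta"
  shows "fact (length beta + 1)
         * card {sigma \<in> permutations_of_set U. compatible beta sigma \<and> ranked_above sigma i (beta ! r)}
       = (r + 1) * fact (card U)"
proof -
  let ?B = "insert i (set beta)"
  let ?Gamma = "(\<lambda>q. insert_at q i beta) ` {..r}"
  have "compatible beta sigma \<and> ranked_above sigma i (beta ! r) \<longleftrightarrow>
      filter (\<lambda>x. x \<in> ?B) sigma \<in> ?Gamma"
    if "sigma \<in> permutations_of_set U" for sigma
  proof -
    have "distinct sigma" "?B \<subseteq> set sigma"
      using permutations_of_setD[OF that] assms(3,4) by auto
    then show ?thesis
      using compatible_ranked_above_iff_filter[OF _ _ assms(2,5,6)] by blast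
  qed
  then have "{sigma \<in> permutations_of_set U. compatible beta sigma \<and> ranked_above sigma i (beta ! r)}
      = {sigma \<in> permutations_of_set U. filter (\<lambda>x. x \<in> ?B) sigma \<in> ?Gamma}"
    by blast
  moreover have "card ?Gamma = r + 1"
    using inj_on_insert_at[OF assms(5)] assms(6)
    by (subst card_image) (auto elim: inj_on_subset)
  moreover have "?Gamma \<subseteq> permutations_of_set ?B"
    using distinct_insert_at[OF assms(2,5)] by auto
  moreover have "card ?B = length beta + 1"
    using assms(2,5) by (simp add: distinct_card)
  ultimately show ?thesis
    using card_filter_preimage[OF assms(1), of ?B ?Gamma] assms(3,4) by simp
qed

lemma card_compatible_ranked_above_ratio:
  assumes "finite U" "distinct beta" "set beta \<subseteq> U" "i \<in> U" "i \<notin> set beta" "r < length beta"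
  shows "real (card {sigma \<in> permutations_of_set U. compatible beta sigma \<and> ranked_above sigma i (beta ! r)})
         / real (card {sigma \<in> permutations_of_set U. compatible beta sigma})
       = real (r + 1) / real (length beta + 1)"
proof -
  let ?compatible = "{sigma \<in> permutations_of_set U. compatible beta sigma}"
  let ?above = "{sigma \<in> permutations_of_set U. compatible beta sigma \<and> ranked_above sigma i (beta ! r)}"
  let ?k = "length beta"
  have "fact ?k * ((?k + 1) * card ?above) = fact (?k + 1) * card ?above"
    by (simp add: algebra_simps)
  also have "\<dots> = fact ?k * ((r + 1) * card ?compatible)"
    unfolding card_compatible_ranked_above[OF assms] card_compatible[OF assms(1-3), symmetric]
    by (simp only: mult_ac)
  finally have "(?k + 1) * card ?above = (r + 1) * card ?compatible"
    by simp
  moreover have "card ?compatible \<noteq> 0"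
    using card_compatible[OF assms(1-3)] by (metis fact_nonzero mult_0_right)
  ultimately show ?thesis
    by (simp add: frac_eq_eq mult.commute flip: of_nat_mult del: of_nat_Suc)
qed

theorem theorem1:
  fixes U :: "'a set" and beta :: "'a list" and n k r :: nat and i :: 'a
  assumes "finite U" and "card U = n"
    and "1 \<le> k" and "k < n" and "r \<le> k - 1"
    and "distinct beta" and "length beta = k" and "set beta \<subseteq> U"
    and "i \<in> U" and "i \<notin> set beta"
  shows "real (card {sigma \<in> permutations_of_set U. compatible beta sigma}) = t_count n k
     \<and> real (card {sigma \<in> permutations_of_set U. compatible beta sigma \<and>
                        ranked_above sigma i (beta ! r)})
         / real (card {sigma \<in> permutations_of_set U. compatible beta sigma})
         = p_prob n k r"
proof
  have "fact k * card {sigma \<in> permutations_of_set U. compatible beta sigma} = fact n"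
    using card_compatible[OF assms(1,6,8)] assms(2,7) by simp
  then have "real (card {sigma \<in> permutations_of_set U. compatible beta sigma})
      = real (fact n) / real (fact k)"
    by (metis fact_nonzero nonzero_mult_div_cancel_left of_nat_eq_0_iff of_nat_mult)
  then show "real (card {sigma \<in> permutations_of_set U. compatible beta sigma}) = t_count n k"
    using t_count_eq[of k n] assms(4) by simp
  have "r < k"
    using assms(3,5) by simp
  then show "real (card {sigma \<in> permutations_of_set U. compatible beta sigma \<and>
                        ranked_above sigma i (beta ! r)})
         / real (card {sigma \<in> permutations_of_set U. compatible beta sigma})
         = p_prob n k r"
    using card_compatible_ranked_above_ratio[OF assms(1,6,8-10)] p_prob_eq[OF _ assms(4)] assms(7)
    by simp
qed

end
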